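(* Let $0<T<\infty$, $\Delta=(0,T]$, and let $F$ be a distribution on $[0,\infty)$ belonging to $\mathcal L_\Delta$. Assume there exist $c>0$ and $x_0<\infty$ such that $F(x+t+\Delta)\ge cF(x+\Delta)$ for all $t\in(0,x]$ and all $x>x_0$. Then $F\in\mathcal S_\Delta$.
   Context: $x+\Delta=(x,x+T]$. $F\in\mathcal L_\Delta$ means $F(x+\Delta)>0$ for all large $x$ and $F(x+t+\Delta)/F(x+\Delta)\to1$ as $x\to\infty$ uniformly in $t\in[0,1]$. A distribution $F$ on $[0,\infty)$ with unbounded support is in $\mathcal S_\Delta$ if $F\in\mathcal L_\Delta$ and $(F*F)(x+\Delta)\sim2F(x+\Delta)$ as $x\to\infty$. *)

theory Defs
  imports "HOL-Probability.Probability" "HOL-Library.Landau_Symbols"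
begin

definition distribution_nonneg :: "real measure \<Rightarrow> bool" where
  "distribution_nonneg F \<longleftrightarrow> prob_space F \<and> sets F = sets borel \<and> measure F {..<0} = 0"

text \<open>F(x + Delta) with Delta = (0,T], i.e. the mass of the interval (x, x+T].\<close>
definition Fdelta :: "real measure \<Rightarrow> real \<Rightarrow> real \<Rightarrow> real" where
  "Fdelta F T x = measure F {x<..x+T}"

definition L_Delta :: "real \<Rightarrow> real measure \<Rightarrow> bool" where
  "L_Delta T F \<longleftrightarrow>
     (\<forall>\<^sub>F x in at_top. Fdelta F T x > 0) \<and>
     (\<forall>e>0. \<forall>\<^sub>F x in at_top. \<forall>t\<in>{0..1}. \<bar>Fdelta F T (x + t) / Fdelta F T x - 1\<bar> < e)"

definition S_Delta :: "real \<Rightarrow> real measure \<Rightarrow> bool" where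
  "S_Delta T F \<longleftrightarrow>
     (\<forall>M. measure F {M<..} > 0) \<and> L_Delta T F \<and>
     ((\<lambda>x. Fdelta (F \<star> F) T x) \<sim>[at_top] (\<lambda>x. 2 * Fdelta F T x))"

end

theory Submission
  imports Defs
begin

text \<open>Splitting according to which summand is at most \<open>x/2\<close>,
  \<open>(F \<star> F)(x + \<Delta>) = 2 \<integral>\<^bsub>[0, x/2]\<^esub> F(x - y + \<Delta>) F(dy) + R(x)\<close> with \<open>0 \<le> R(x) \<le> F(x/2 + \<Delta>)\<^sup>2\<close>.
  Divided by \<open>F(x + \<Delta>)\<close>, the integrand tends to 1 pointwise because \<open>F\<close> is long-tailed, and it is
  bounded by \<open>1/c\<close> by the hypothesis at \<open>x - y\<close> with shift \<open>y \<le> x - y\<close>; dominated convergence makes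
  the integral \<open>\<sim> F(x + \<Delta>)\<close>. The hypothesis with \<open>t = x/2\<close> gives
  \<open>R(x)/F(x + \<Delta>) \<le> F(x/2 + \<Delta>)/c \<to> 0\<close>.\<close>

lemma tendsto_shift_ratio_add:
  fixes g :: "real \<Rightarrow> real"
  assumes s: "((\<lambda>x. g (x + s) / g x) \<longlongrightarrow> 1) at_top"
    and t: "((\<lambda>x. g (x + t) / g x) \<longlongrightarrow> 1) at_top"
  shows "((\<lambda>x. g (x + (s + t)) / g x) \<longlongrightarrow> 1) at_top"
proof -
  have shift: "filterlim (\<lambda>x. x + s) at_top at_top"
    using filterlim_tendsto_add_at_top[OF tendsto_const[of s] filterlim_ident] by (simp add: add.commute)
  have t': "((\<lambda>x. g (x + s + t) / g (x + s)) \<longlongrightarrow> 1) at_top"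
    using filterlim_compose[OF t shift] by simp
  have "\<forall>\<^sub>F x in at_top. g (x + s) / g x > 0"
    using s by (rule order_tendstoD) simp
  then have "\<forall>\<^sub>F x in at_top. g (x + s + t) / g (x + s) * (g (x + s) / g x) = g (x + (s + t)) / g x"
    by eventually_elim (auto simp: add.assoc)
  moreover have "((\<lambda>x. g (x + s + t) / g (x + s) * (g (x + s) / g x)) \<longlongrightarrow> 1 * 1) at_top"
    by (intro tendsto_mult t' s)
  ultimately show ?thesis
    using Lim_transform_eventually by fastforce
qed

lemma tendsto_shift_ratio_nonneg:
  fixes g :: "real \<Rightarrow> real"
  assumes unit: "\<And>t. t \<in> {0..1} \<Longrightarrow> ((\<lambda>x. g (x + t) / g x) \<longlongrightarrow> 1) at_top"
    and "t \<ge> 0"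
  shows "((\<lambda>x. g (x + t) / g x) \<longlongrightarrow> 1) at_top"
proof -
  have "t \<in> {0..real n} \<Longrightarrow> ((\<lambda>x. g (x + t) / g x) \<longlongrightarrow> 1) at_top" for n
  proof (induction n arbitrary: t)
    case 0
    then show ?case using unit[of 0] by simp
  next
    case (Suc n)
    show ?case
    proof (cases "t \<le> 1")
      case True
      then show ?thesis using Suc.prems unit by simp
    next
      case False
      then have "((\<lambda>x. g (x + (1 + (t - 1))) / g x) \<longlongrightarrow> 1) at_top"
        using Suc unit by (intro tendsto_shift_ratio_add) auto
      then show ?thesis by simp
    qed
  qed
  then show ?thesis
    using \<open>t \<ge> 0\<close> by (meson atLeastAtMost_iff real_nat_ceiling_ge)
qed

lemma L_Delta_tendsto_shift_ratio:
  assumes "L_Delta T F" and "t \<ge> 0"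
  shows "((\<lambda>x. Fdelta F T (x + t) / Fdelta F T x) \<longlongrightarrow> 1) at_top"
proof (rule tendsto_shift_ratio_nonneg[OF _ \<open>t \<ge> 0\<close>])
  fix s :: real assume s: "s \<in> {0..1}"
  show "((\<lambda>x. Fdelta F T (x + s) / Fdelta F T x) \<longlongrightarrow> 1) at_top"
  proof (rule tendstoI)
    fix e :: real assume "e > 0"
    with assms(1) have "\<forall>\<^sub>F x in at_top. \<forall>s\<in>{0..1}. \<bar>Fdelta F T (x + s) / Fdelta F T x - 1\<bar> < e"
      unfolding L_Delta_def by blast
    then show "\<forall>\<^sub>F x in at_top. dist (Fdelta F T (x + s) / Fdelta F T x) 1 < e"
      by eventually_elim (use s in \<open>auto simp: dist_real_def\<close>)
  qed
qed

lemma distribution_nonneg_real_distribution: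
  "distribution_nonneg F \<Longrightarrow> real_distribution F"
  unfolding distribution_nonneg_def real_distribution_def real_distribution_axioms_def by auto

lemma distribution_nonneg_AE_nonneg:
  assumes "distribution_nonneg F"
  shows "AE a in F. a \<ge> 0"
proof -
  interpret real_distribution F
    using assms by (rule distribution_nonneg_real_distribution)
  show ?thesis
    by (rule AE_I'[of "{..<0}"])
      (use assms in \<open>auto simp: distribution_nonneg_def null_sets_def emeasure_eq_measure\<close>)
qed

lemma Fdelta_eq_cdf_diff:
  assumes "real_distribution F" and "T > 0"
  shows "Fdelta F T x = cdf F (x + T) - cdf F x"
proof -
  interpret real_distribution F by fact
  show ?thesis
    unfolding Fdelta_def using \<open>T > 0\<close> by (subst cdf_diff_eq) auto
qed

lemma borel_measurable_Fdelta:
  assumes "real_distribution F" and "T > 0"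
  shows "Fdelta F T \<in> borel_measurable borel"
proof -
  interpret real_distribution F by fact
  have [measurable]: "cdf F \<in> borel_measurable borel"
    by (rule borel_measurable_mono) (auto simp: mono_def intro: cdf_nondecreasing)
  show ?thesis
    unfolding Fdelta_eq_cdf_diff[OF assms, abs_def] by measurable
qed

lemma Fdelta_tendsto_0:
  assumes "real_distribution F" and "T > 0"
  shows "(Fdelta F T \<longlongrightarrow> 0) at_top"
proof -
  interpret real_distribution F by fact
  have "((\<lambda>x. cdf F (x + T) - cdf F x) \<longlongrightarrow> 1 - 1) at_top"
    by (intro tendsto_diff cdf_lim_at_top_prob filterlim_compose[OF cdf_lim_at_top_prob]
        filterlim_tendsto_add_at_top[OF tendsto_const[of T] filterlim_ident, unfolded add.commute[of T]])
  then show ?thesis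
    by (simp add: Fdelta_eq_cdf_diff[OF assms, abs_def])
qed

lemma tendsto_half_square_ratio_0:
  fixes g :: "real \<Rightarrow> real"
  assumes nonneg: "\<And>x. g x \<ge> 0" and lim: "(g \<longlongrightarrow> 0) at_top" and "c > 0"
    and "\<forall>\<^sub>F x in at_top. c * g (x / 2) \<le> g x"
  shows "((\<lambda>x. g (x / 2)^2 / g x) \<longlongrightarrow> 0) at_top"
proof (rule tendsto_sandwich[where f = "\<lambda>_. 0" and h = "\<lambda>x. g (x / 2) / c"])
  have "filterlim (\<lambda>x::real. x / 2) at_top at_top"
    using filterlim_tendsto_pos_mult_at_top[OF tendsto_const[of "1/2"] _ filterlim_ident] by simp
  then show "((\<lambda>x. g (x / 2) / c) \<longlongrightarrow> 0) at_top"
    by (intro tendsto_divide_zero filterlim_compose[OF lim])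
  show "\<forall>\<^sub>F x in at_top. g (x / 2)^2 / g x \<le> g (x / 2) / c"
    using assms(4)
  proof eventually_elim
    case (elim x)
    show ?case
    proof (cases "g x = 0")
      case False
      have "g (x / 2) * (c * g (x / 2)) \<le> g (x / 2) * g x"
        using elim nonneg[of "x/2"] by (rule mult_left_mono)
      moreover have "g x > 0"
        using False nonneg[of x] by simp
      ultimately show ?thesis
        using \<open>c > 0\<close> by (simp add: field_simps power2_eq_square)
    qed (use \<open>c > 0\<close> nonneg in simp)
  qed
qed (use nonneg in auto)

definition conv_head :: "real measure \<Rightarrow> real \<Rightarrow> real \<Rightarrow> real" where
  "conv_head F T x = (\<integral>a. indicator {..x/2} a * Fdelta F T (x - a) \<partial>F)"

lemma emeasure_convolution_self_split:
  assumes "real_distribution F" and "T > 0"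
  obtains R where "R \<le> ennreal (Fdelta F T (x/2)) * ennreal (Fdelta F T (x/2))"
    and "emeasure (F \<star> F) {x<..x+T} =
      (\<integral>\<^sup>+a. ennreal (indicator {..x/2} a * Fdelta F T (x - a)) \<partial>F) +
      (\<integral>\<^sup>+a. ennreal (indicator {..x/2} a * Fdelta F T (x - a)) \<partial>F) + R"
proof -
  interpret real_distribution F by fact
  interpret pair_sigma_finite F F ..
  define I where "I = {x<..x+T}"
  define J where "J = {x/2<..x/2+T}"
  define H where "H = (\<integral>\<^sup>+a. ennreal (indicator {..x/2} a * Fdelta F T (x - a)) \<partial>F)"
  have [measurable]: "Fdelta F T \<in> borel_measurable borel"
    by (rule borel_measurable_Fdelta) fact+
  have fiber: "(\<integral>\<^sup>+b. indicator I (a + b) \<partial>F) = ennreal (Fdelta F T (x - a))"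
    and fiber': "(\<integral>\<^sup>+b. indicator I (b + a) \<partial>F) = ennreal (Fdelta F T (x - a))" for a
  proof -
    have "(\<integral>\<^sup>+b. indicator I (a + b) \<partial>F) = (\<integral>\<^sup>+b. indicator {x-a<..x-a+T} b \<partial>F)"
      by (intro nn_integral_cong) (auto simp: I_def split: split_indicator)
    then show "(\<integral>\<^sup>+b. indicator I (a + b) \<partial>F) = ennreal (Fdelta F T (x - a))"
      by (simp add: emeasure_eq_measure Fdelta_def)
    then show "(\<integral>\<^sup>+b. indicator I (b + a) \<partial>F) = ennreal (Fdelta F T (x - a))"
      by (simp add: add.commute)
  qed
  \<comment> \<open>If \<open>a + b \<in> I\<close>, then \<open>a \<le> x/2\<close> and \<open>b \<le> x/2\<close> exclude each other, and if neither holds both lie in \<open>J\<close>.\<close>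
  have split: "(indicator I (a + b) :: ennreal) = indicator {..x/2} a * indicator I (a + b) +
      indicator {..x/2} b * indicator I (a + b) + indicator J a * indicator J b * indicator I (a + b)" for a b
    using \<open>T > 0\<close> by (auto simp: I_def J_def split: split_indicator)
  have "emeasure (F \<star> F) I = (\<integral>\<^sup>+a. \<integral>\<^sup>+b. indicator I (a + b) \<partial>F \<partial>F)"
    by (rule convolution_emeasure') (auto simp: I_def)
  also have "\<dots> = (\<integral>\<^sup>+a. (\<integral>\<^sup>+b. indicator {..x/2} a * indicator I (a + b) \<partial>F) +
      (\<integral>\<^sup>+b. indicator {..x/2} b * indicator I (a + b) \<partial>F) +
      (\<integral>\<^sup>+b. indicator J a * indicator J b * indicator I (a + b) \<partial>F) \<partial>F)"
    by (intro nn_integral_cong, subst split) (simp add: nn_integral_add I_def J_def)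
  also have "\<dots> = (\<integral>\<^sup>+a. \<integral>\<^sup>+b. indicator {..x/2} a * indicator I (a + b) \<partial>F \<partial>F) +
      (\<integral>\<^sup>+a. \<integral>\<^sup>+b. indicator {..x/2} b * indicator I (a + b) \<partial>F \<partial>F) +
      (\<integral>\<^sup>+a. \<integral>\<^sup>+b. indicator J a * indicator J b * indicator I (a + b) \<partial>F \<partial>F)"
    by (simp add: nn_integral_add I_def J_def)
  also have "(\<integral>\<^sup>+a. \<integral>\<^sup>+b. indicator {..x/2} a * indicator I (a + b) \<partial>F \<partial>F) = H"
    unfolding H_def
    by (intro nn_integral_cong) (simp add: nn_integral_cmult fiber split: split_indicator)
  also have "(\<integral>\<^sup>+a. \<integral>\<^sup>+b. indicator {..x/2} b * indicator I (a + b) \<partial>F \<partial>F) =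
      (\<integral>\<^sup>+b. \<integral>\<^sup>+a. indicator {..x/2} b * indicator I (a + b) \<partial>F \<partial>F)"
    by (rule Fubini'[symmetric]) (simp add: I_def)
  also have "\<dots> = H"
    unfolding H_def
    by (intro nn_integral_cong) (simp add: nn_integral_cmult fiber' split: split_indicator)
  finally have eq: "emeasure (F \<star> F) I = H + H +
      (\<integral>\<^sup>+a. \<integral>\<^sup>+b. indicator J a * indicator J b * indicator I (a + b) \<partial>F \<partial>F)" .
  have "(\<integral>\<^sup>+a. \<integral>\<^sup>+b. indicator J a * indicator J b * indicator I (a + b) \<partial>F \<partial>F) \<le>
      (\<integral>\<^sup>+a. \<integral>\<^sup>+b. indicator J a * indicator J b \<partial>F \<partial>F)"
    by (intro nn_integral_mono) (auto split: split_indicator)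
  also have "\<dots> = ennreal (Fdelta F T (x/2)) * ennreal (Fdelta F T (x/2))"
    by (simp add: nn_integral_cmult nn_integral_multc J_def emeasure_eq_measure Fdelta_def)
  finally show ?thesis
    using that eq unfolding H_def I_def by blast
qed

lemma conv_head_remainder_bounds:
  assumes "real_distribution F" and "T > 0"
  shows "0 \<le> Fdelta (F \<star> F) T x - 2 * conv_head F T x"
    and "Fdelta (F \<star> F) T x - 2 * conv_head F T x \<le> Fdelta F T (x/2)^2"
proof -
  interpret real_distribution F by fact
  interpret C: finite_measure "F \<star> F"
    by (rule convolution_finite) (auto intro: finite_measure_axioms)
  have [measurable]: "Fdelta F T \<in> borel_measurable borel"
    by (rule borel_measurable_Fdelta) fact+
  have bounded: "0 \<le> indicator {..x/2} a * Fdelta F T (x - a)"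
      "indicator {..x/2} a * Fdelta F T (x - a) \<le> 1" for a
    by (auto simp: Fdelta_def split: split_indicator)
  have "integrable F (\<lambda>a. indicator {..x/2} a * Fdelta F T (x - a))"
    by (rule integrable_const_bound[where B = 1]) (use bounded in auto)
  then have head: "(\<integral>\<^sup>+a. ennreal (indicator {..x/2} a * Fdelta F T (x - a)) \<partial>F) =
      ennreal (conv_head F T x)"
    unfolding conv_head_def by (rule nn_integral_eq_integral) (use bounded in auto)
  have head_nonneg: "0 \<le> conv_head F T x"
    unfolding conv_head_def by (rule integral_nonneg_AE) (use bounded in auto)
  obtain R where R: "R \<le> ennreal (Fdelta F T (x/2)) * ennreal (Fdelta F T (x/2))"
    and eq: "ennreal (Fdelta (F \<star> F) T x) = ennreal (conv_head F T x) + ennreal (conv_head F T x) + R"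
    using emeasure_convolution_self_split[OF assms, of x]
    unfolding head by (metis C.emeasure_eq_measure Fdelta_def)
  obtain r where r: "R = ennreal r" "0 \<le> r" "r \<le> Fdelta F T (x/2)^2"
  proof (cases R rule: ennreal_cases)
    case (real r)
    then show ?thesis
      using R that by (simp add: ennreal_mult[symmetric] ennreal_le_iff power2_eq_square Fdelta_def)
  next
    case top
    then show ?thesis
      using R by (simp add: ennreal_mult_eq_top_iff top_unique)
  qed
  have "ennreal (Fdelta (F \<star> F) T x) = ennreal (conv_head F T x + conv_head F T x + r)"
    using eq head_nonneg r(1,2) by (simp add: ennreal_plus[symmetric] del: ennreal_plus)
  then have "Fdelta (F \<star> F) T x = conv_head F T x + conv_head F T x + r"
    using head_nonneg r(2) by (subst (asm) ennreal_inj) (auto simp: Fdelta_def)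
  then show "0 \<le> Fdelta (F \<star> F) T x - 2 * conv_head F T x"
    and "Fdelta (F \<star> F) T x - 2 * conv_head F T x \<le> Fdelta F T (x/2)^2"
    using r by simp_all
qed

lemma conv_head_ratio_tendsto_1:
  assumes F: "distribution_nonneg F" and "T > 0" and L: "L_Delta T F" and "c > 0"
    and dominated: "\<And>x t. x > x0 \<Longrightarrow> t \<in> {0<..x} \<Longrightarrow> c * Fdelta F T x \<le> Fdelta F T (x + t)"
  shows "((\<lambda>x. conv_head F T x / Fdelta F T x) \<longlongrightarrow> 1) at_top"
proof -
  have "real_distribution F"
    using F by (rule distribution_nonneg_real_distribution)
  interpret real_distribution F by fact
  have nonneg: "AE a in F. a \<ge> 0"
    using F by (rule distribution_nonneg_AE_nonneg)
  have pos: "\<forall>\<^sub>F x in at_top. Fdelta F T x > 0"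
    using L unfolding L_Delta_def by blast
  have [measurable]: "Fdelta F T \<in> borel_measurable borel"
    by (rule borel_measurable_Fdelta) fact+
  define s where "s x a = indicator {..x/2} a * Fdelta F T (x - a) / Fdelta F T x" for x a
  have "((\<lambda>x. \<integral>a. s x a \<partial>F) \<longlongrightarrow> (\<integral>a. 1 \<partial>F)) at_top"
  proof (rule integral_dominated_convergence_at_top[where w = "\<lambda>_. max 1 (1 / c)"])
    show "AE a in F. ((\<lambda>x. s x a) \<longlongrightarrow> 1) at_top"
      using nonneg
    proof eventually_elim
      case (elim a)
      have "((\<lambda>x. Fdelta F T (x - a + a) / Fdelta F T (x - a)) \<longlongrightarrow> 1) at_top"
        by (rule filterlim_compose[OF L_Delta_tendsto_shift_ratio[OF L elim]])
          (use filterlim_tendsto_add_at_top[OF tendsto_const[of "-a"] filterlim_ident] in simp)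
      then have "((\<lambda>x. Fdelta F T (x - a) / Fdelta F T x) \<longlongrightarrow> 1) at_top"
        using tendsto_inverse by fastforce
      moreover have "\<forall>\<^sub>F x in at_top. Fdelta F T (x - a) / Fdelta F T x = s x a"
        using eventually_ge_at_top[of "2 * a"] by eventually_elim (auto simp: s_def)
      ultimately show ?case
        by (rule Lim_transform_eventually)
    qed
    show "\<forall>\<^sub>F x in at_top. AE a in F. norm (s x a) \<le> max 1 (1 / c)"
      using pos eventually_gt_at_top[of "2 * max x0 0"]
    proof eventually_elim
      case (elim x)
      show ?case
        using nonneg
      proof eventually_elim
        case (elim a)
        consider "a = 0" | "a > x/2" | "0 < a" "a \<le> x/2"
          using elim by linarith
        then show ?case
        proof cases
          case 3
          then have "c * Fdelta F T (x - a) \<le> Fdelta F T x"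
            using dominated[of "x - a" a] \<open>x > 2 * max x0 0\<close> by auto
          then have "Fdelta F T (x - a) / Fdelta F T x \<le> 1 / c"
            using \<open>Fdelta F T x > 0\<close> \<open>c > 0\<close> by (simp add: field_simps)
          then show ?thesis
            using 3 by (simp add: s_def Fdelta_def)
        qed (use \<open>Fdelta F T x > 0\<close> in \<open>auto simp: s_def split: split_indicator\<close>)
      qed
    qed
  qed (auto simp: s_def)
  moreover have "(\<integral>a. s x a \<partial>F) = conv_head F T x / Fdelta F T x" for x
    unfolding s_def conv_head_def by simp
  ultimately show ?thesis
    using prob_space by simp
qed

lemma Fdelta_convolution_self_asymp:
  assumes "distribution_nonneg F" and "T > 0" and L: "L_Delta T F" and "c > 0"
    and dominated: "\<And>x t. x > x0 \<Longrightarrow> t \<in> {0<..x} \<Longrightarrow> c * Fdelta F T x \<le> Fdelta F T (x + t)"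
  shows "(\<lambda>x. Fdelta (F \<star> F) T x) \<sim>[at_top] (\<lambda>x. 2 * Fdelta F T x)"
proof -
  have F: "real_distribution F"
    using assms(1) by (rule distribution_nonneg_real_distribution)
  have Fdelta_nonneg: "0 \<le> Fdelta F T x" for x
    by (simp add: Fdelta_def)
  have pos: "\<forall>\<^sub>F x in at_top. Fdelta F T x > 0"
    using L unfolding L_Delta_def by blast
  define rest where "rest x = Fdelta (F \<star> F) T x - 2 * conv_head F T x" for x
  have rest_nonneg: "0 \<le> rest x" and rest_le: "rest x \<le> Fdelta F T (x / 2)^2" for x
    using conv_head_remainder_bounds[OF F \<open>T > 0\<close>] unfolding rest_def by auto
  have "\<forall>\<^sub>F x in at_top. c * Fdelta F T (x / 2) \<le> Fdelta F T x"
    using eventually_gt_at_top[of "2 * max x0 0"]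
  proof eventually_elim
    case (elim x)
    then show ?case
      using dominated[of "x/2" "x/2"] by simp
  qed
  then have half_square: "((\<lambda>x. Fdelta F T (x / 2)^2 / Fdelta F T x) \<longlongrightarrow> 0) at_top"
    by (rule tendsto_half_square_ratio_0[OF Fdelta_nonneg Fdelta_tendsto_0[OF F \<open>T > 0\<close>] \<open>c > 0\<close>])
  have rest_ratio: "((\<lambda>x. rest x / Fdelta F T x) \<longlongrightarrow> 0) at_top"
  proof (rule tendsto_sandwich[OF _ _ tendsto_const half_square])
    show "\<forall>\<^sub>F x in at_top. 0 \<le> rest x / Fdelta F T x"
      by (simp add: rest_nonneg Fdelta_nonneg)
    show "\<forall>\<^sub>F x in at_top. rest x / Fdelta F T x \<le> Fdelta F T (x / 2)^2 / Fdelta F T x"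
      by (simp add: rest_le Fdelta_nonneg divide_right_mono)
  qed
  have head_ratio: "((\<lambda>x. conv_head F T x / Fdelta F T x) \<longlongrightarrow> 1) at_top"
    by (rule conv_head_ratio_tendsto_1[OF assms])
  have "((\<lambda>x. conv_head F T x / Fdelta F T x + rest x / Fdelta F T x / 2) \<longlongrightarrow> 1 + 0 / 2) at_top"
    by (intro tendsto_add tendsto_divide head_ratio rest_ratio tendsto_const) simp
  moreover have "\<forall>\<^sub>F x in at_top. conv_head F T x / Fdelta F T x + rest x / Fdelta F T x / 2 =
      Fdelta (F \<star> F) T x / (2 * Fdelta F T x)"
    using pos
  proof eventually_elim
    case (elim x)
    then show ?case
      by (simp add: rest_def field_simps)
  qed
  ultimately have "((\<lambda>x. Fdelta (F \<star> F) T x / (2 * Fdelta F T x)) \<longlongrightarrow> 1 + 0 / 2) at_top"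
    by (rule Lim_transform_eventually)
  then show ?thesis
    by (intro asymp_equivI') simp
qed

lemma measure_greaterThan_pos_if_Fdelta_pos:
  assumes "finite_measure F" and "sets F = sets borel"
    and "\<forall>\<^sub>F x in at_top. Fdelta F T x > 0"
  shows "measure F {M<..} > 0"
proof -
  obtain N where N: "\<And>x. x \<ge> N \<Longrightarrow> Fdelta F T x > 0"
    using assms(3) unfolding eventually_at_top_linorder by blast
  have "0 < Fdelta F T (max N M)"
    by (rule N) simp
  also have "\<dots> \<le> measure F {M<..}"
    unfolding Fdelta_def using assms(2) by (intro finite_measure.finite_measure_mono[OF assms(1)]) auto
  finally show ?thesis .
qed

theorem proposition9:
  fixes F :: "real measure" and T :: real
  assumes "0 < T"
    and "distribution_nonneg F"
    and "L_Delta T F"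
    and "\<exists>c>0. \<exists>x0. \<forall>x>x0. \<forall>t\<in>{0<..x}. Fdelta F T (x + t) \<ge> c * Fdelta F T x"
  shows "S_Delta T F"
proof -
  obtain c x0 where "c > 0"
    and "\<And>x t. x > x0 \<Longrightarrow> t \<in> {0<..x} \<Longrightarrow> c * Fdelta F T x \<le> Fdelta F T (x + t)"
    using assms(4) by blast
  then have "(\<lambda>x. Fdelta (F \<star> F) T x) \<sim>[at_top] (\<lambda>x. 2 * Fdelta F T x)"
    by (rule Fdelta_convolution_self_asymp[OF assms(2,1,3)])
  moreover have "measure F {M<..} > 0" for M
  proof (rule measure_greaterThan_pos_if_Fdelta_pos)
    interpret real_distribution F
      using assms(2) by (rule distribution_nonneg_real_distribution)
    show "finite_measure F"
      by (rule finite_measure_axioms)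
    show "sets F = sets borel"
      by simp
    show "\<forall>\<^sub>F x in at_top. Fdelta F T x > 0"
      using assms(3) unfolding L_Delta_def by blast
  qed
  ultimately show ?thesis
    unfolding S_Delta_def using assms(3) by blast
qed

end
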